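(* Let $A$ be a graded Poisson algebra with a conjugation $\rho$, let $*$ be a nondegenerate short star-product on $A$, $\mathbf{A}=(A,* )$ the corresponding quantization, $g$ and $T$ the corresponding automorphism and nondegenerate $g$-twisted trace, and regard $\rho$ as an antilinear map $\mathbf{A}\to\mathbf{A}$ (as $\mathbf{A}=A$ as filtered vector spaces). Then: (i) $*$ is conjugation-invariant if and only if $\rho$ is a conjugation on $\mathbf{A}$ (an antilinear algebra automorphism) which conjugates $T$, i.e., $T(\rho(\mathbf{a}))=\overline{T(\mathbf{a})}$ (hence $\rho$ commutes with $g$); (ii) in this situation, $*$ is Hermitian if and only if in addition $\rho^2=g$.
   Context: $A=\bigoplus_{d\ge0}A_d$ commutative graded with $A_0=\mathbb{C}$, $\dim A_d<\infty$, Poisson bracket of degree $-2$; $s=(-1)^d$. Conjugation on $A$: $\mathbb{C}$-antilinear degree-preserving Poisson automorphism; conjugation on a quantization: antilinear filtration-preserving algebra automorphism commuting with $s$. Star-product $a*b=\sum_kC_k(a,b)$ ($C_k$ degree $-2k$, $C_0$ product, $C_1(a,b)-C_1(b,a)=\{a,b\}$); short: $C_k(a,b)=0$ for $k>\min(\deg a,\deg b)$; nondegenerate: $\langle a,b\rangle=\mathrm{CT}(a*b)$ nondegenerate on each $A_i$. $T(\mathbf{a})=\mathrm{CT}(\mathbf{a})$ on $(A,* )$, and $g$ is the unique filtration-preserving automorphism with $T(\mathbf{a}*\mathbf{b})=T(\mathbf{b}*g(\mathbf{a}))$. Conjugation-invariant: $\rho(a*b)=\rho(a)*\rho(b)$.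 A conjugation-invariant short star-product is Hermitian if $\mathrm{CT}(a*b)=\mathrm{CT}(b*\rho^2(a))$. *)

theory Defs
  imports Complex_Main
begin

text \<open>The underlying complex vector space of A is a type 'a of class comm_ring_1
(its ring multiplication is the commutative product of A) together with an explicit complex
scalar multiplication sc.
The star-product is given by its coefficient maps C :: nat => 'a => 'a => 'a.\<close>

definition hdecomp :: "(nat \<Rightarrow> 'a::comm_ring_1 set) \<Rightarrow> 'a \<Rightarrow> (nat \<Rightarrow> 'a) \<Rightarrow> bool" where
  "hdecomp A x f \<longleftrightarrow> finite {d. f d \<noteq> 0} \<and> (\<forall>d. f d \<in> A d) \<and> x = (\<Sum>d\<in>{d. f d \<noteq> 0}. f d)"

definition comp :: "(nat \<Rightarrow> 'a::comm_ring_1 set) \<Rightarrow> 'a \<Rightarrow> nat \<Rightarrow> 'a" where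
  "comp A x = (THE f. hdecomp A x f)"

definition filt :: "(nat \<Rightarrow> 'a::comm_ring_1 set) \<Rightarrow> nat \<Rightarrow> 'a set" where
  "filt A n = {x. \<forall>d>n. comp A x d = 0}"

definition par :: "(nat \<Rightarrow> 'a::comm_ring_1 set) \<Rightarrow> 'a \<Rightarrow> 'a" where
  "par A x = (\<Sum>d\<in>{d. comp A x d \<noteq> 0}. (if even d then comp A x d else - comp A x d))"

definition CT :: "(complex \<Rightarrow> 'a \<Rightarrow> 'a) \<Rightarrow> (nat \<Rightarrow> 'a::comm_ring_1 set) \<Rightarrow> 'a \<Rightarrow> complex" where
  "CT sc A x = (THE c. comp A x 0 = sc c 1)"

definition bilinear_sc :: "(complex \<Rightarrow> 'a \<Rightarrow> 'a) \<Rightarrow> ('a::comm_ring_1 \<Rightarrow> 'a \<Rightarrow> 'a) \<Rightarrow> bool" where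
  "bilinear_sc sc m \<longleftrightarrow>
     (\<forall>x y z. m (x + y) z = m x z + m y z) \<and> (\<forall>x y z. m x (y + z) = m x y + m x z) \<and>
     (\<forall>c x y. m (sc c x) y = sc c (m x y)) \<and> (\<forall>c x y. m x (sc c y) = sc c (m x y))"

definition graded_poisson :: "(complex \<Rightarrow> 'a \<Rightarrow> 'a) \<Rightarrow> (nat \<Rightarrow> 'a::comm_ring_1 set) \<Rightarrow> ('a \<Rightarrow> 'a \<Rightarrow> 'a) \<Rightarrow> bool" where
  "graded_poisson sc A pb \<longleftrightarrow>
     vector_space sc \<and> (1::'a) \<noteq> 0 \<and>
     (\<forall>c x y. sc c (x * y) = sc c x * y) \<and>
     (\<forall>d. module.subspace sc (A d)) \<and>
     (\<forall>d. \<exists>B. finite B \<and> B \<subseteq> A d \<and> module.span sc B = A d) \<and>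
     (\<forall>x. \<exists>!f. hdecomp A x f) \<and>
     A 0 = range (\<lambda>c. sc c 1) \<and>
     (\<forall>i j x y. x \<in> A i \<longrightarrow> y \<in> A j \<longrightarrow> x * y \<in> A (i + j)) \<and>
     bilinear_sc sc pb \<and>
     (\<forall>x y. pb x y = - pb y x) \<and>
     (\<forall>x y z. pb x (pb y z) + pb y (pb z x) + pb z (pb x y) = 0) \<and>
     (\<forall>x y z. pb x (y * z) = pb x y * z + y * pb x z) \<and>
     (\<forall>i j x y. x \<in> A i \<longrightarrow> y \<in> A j \<longrightarrow>
        (if 2 \<le> i + j then pb x y \<in> A (i + j - 2) else pb x y = 0))"

definition antilinear :: "(complex \<Rightarrow> 'a \<Rightarrow> 'a) \<Rightarrow> ('a::comm_ring_1 \<Rightarrow> 'a) \<Rightarrow> bool" where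
  "antilinear sc r \<longleftrightarrow> (\<forall>x y. r (x + y) = r x + r y) \<and> (\<forall>c x. r (sc c x) = sc (cnj c) (r x))"

definition conjugation :: "(complex \<Rightarrow> 'a \<Rightarrow> 'a) \<Rightarrow> (nat \<Rightarrow> 'a::comm_ring_1 set) \<Rightarrow> ('a \<Rightarrow> 'a \<Rightarrow> 'a) \<Rightarrow> ('a \<Rightarrow> 'a) \<Rightarrow> bool" where
  "conjugation sc A pb r \<longleftrightarrow> antilinear sc r \<and> bij r \<and>
     (\<forall>x y. r (x * y) = r x * r y) \<and> (\<forall>d. r ` A d = A d) \<and>
     (\<forall>x y. r (pb x y) = pb (r x) (r y))"

text \<open>The star-product a*b = sum_k C_k(a,b) (a finite sum by degree reasons).\<close>
definition star :: "(nat \<Rightarrow> 'a \<Rightarrow> 'a \<Rightarrow> 'a::comm_ring_1) \<Rightarrow> 'a \<Rightarrow> 'a \<Rightarrow> 'a" where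
  "star C x y = (\<Sum>k\<in>{k. C k x y \<noteq> 0}. C k x y)"

definition star_product :: "(complex \<Rightarrow> 'a \<Rightarrow> 'a) \<Rightarrow> (nat \<Rightarrow> 'a::comm_ring_1 set) \<Rightarrow> ('a \<Rightarrow> 'a \<Rightarrow> 'a) \<Rightarrow> (nat \<Rightarrow> 'a \<Rightarrow> 'a \<Rightarrow> 'a) \<Rightarrow> bool" where
  "star_product sc A pb C \<longleftrightarrow>
     (\<forall>k. bilinear_sc sc (C k)) \<and>
     (\<forall>k i j x y. x \<in> A i \<longrightarrow> y \<in> A j \<longrightarrow>
        (if 2 * k \<le> i + j then C k x y \<in> A (i + j - 2 * k) else C k x y = 0)) \<and>
     (\<forall>x y. C 0 x y = x * y) \<and>
     (\<forall>x y. C 1 x y - C 1 y x = pb x y) \<and>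
     (\<forall>x y z. star C (star C x y) z = star C x (star C y z))"

definition short :: "(nat \<Rightarrow> 'a::comm_ring_1 set) \<Rightarrow> (nat \<Rightarrow> 'a \<Rightarrow> 'a \<Rightarrow> 'a) \<Rightarrow> bool" where
  "short A C \<longleftrightarrow> (\<forall>k i j x y. x \<in> A i \<longrightarrow> y \<in> A j \<longrightarrow> min i j < k \<longrightarrow> C k x y = 0)"

definition nondegenerate :: "(complex \<Rightarrow> 'a \<Rightarrow> 'a) \<Rightarrow> (nat \<Rightarrow> 'a::comm_ring_1 set) \<Rightarrow> (nat \<Rightarrow> 'a \<Rightarrow> 'a \<Rightarrow> 'a) \<Rightarrow> bool" where
  "nondegenerate sc A C \<longleftrightarrow>
     (\<forall>i. \<forall>x\<in>A i. (\<forall>y\<in>A i. CT sc A (star C x y) = 0) \<longrightarrow> x = 0) \<and>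
     (\<forall>i. \<forall>y\<in>A i. (\<forall>x\<in>A i. CT sc A (star C x y) = 0) \<longrightarrow> y = 0)"

text \<open>g: filtration-preserving (linear) automorphism of (A,*) with T(a*b) = T(b*g(a)), T = CT.\<close>
definition twist_aut :: "(complex \<Rightarrow> 'a \<Rightarrow> 'a) \<Rightarrow> (nat \<Rightarrow> 'a::comm_ring_1 set) \<Rightarrow> (nat \<Rightarrow> 'a \<Rightarrow> 'a \<Rightarrow> 'a) \<Rightarrow> ('a \<Rightarrow> 'a) \<Rightarrow> bool" where
  "twist_aut sc A C g \<longleftrightarrow> Vector_Spaces.linear sc sc g \<and> bij g \<and>
     (\<forall>x y. g (star C x y) = star C (g x) (g y)) \<and> (\<forall>n. g ` filt A n \<subseteq> filt A n) \<and>
     (\<forall>x y. CT sc A (star C x y) = CT sc A (star C y (g x)))"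

definition quant_conjugation :: "(complex \<Rightarrow> 'a \<Rightarrow> 'a) \<Rightarrow> (nat \<Rightarrow> 'a::comm_ring_1 set) \<Rightarrow> (nat \<Rightarrow> 'a \<Rightarrow> 'a \<Rightarrow> 'a) \<Rightarrow> ('a \<Rightarrow> 'a) \<Rightarrow> bool" where
  "quant_conjugation sc A C r \<longleftrightarrow> antilinear sc r \<and> bij r \<and>
     (\<forall>x y. r (star C x y) = star C (r x) (r y)) \<and> (\<forall>n. r ` filt A n \<subseteq> filt A n) \<and>
     (\<forall>x. r (par A x) = par A (r x))"

definition conj_invariant :: "(nat \<Rightarrow> 'a \<Rightarrow> 'a \<Rightarrow> 'a::comm_ring_1) \<Rightarrow> ('a \<Rightarrow> 'a) \<Rightarrow> bool" where
  "conj_invariant C r \<longleftrightarrow> (\<forall>x y. r (star C x y) = star C (r x) (r y))"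

definition hermitian :: "(complex \<Rightarrow> 'a \<Rightarrow> 'a) \<Rightarrow> (nat \<Rightarrow> 'a::comm_ring_1 set) \<Rightarrow> (nat \<Rightarrow> 'a \<Rightarrow> 'a \<Rightarrow> 'a) \<Rightarrow> ('a \<Rightarrow> 'a) \<Rightarrow> bool" where
  "hermitian sc A C r \<longleftrightarrow> conj_invariant C r \<and> short A C \<and>
     (\<forall>x y. CT sc A (star C x y) = CT sc A (star C y (r (r x))))"

end

theory Submission
  imports Defs
begin

text \<open>A conjugation \<open>\<rho>\<close> preserves every \<open>A\<^sub>d\<close>, so it commutes with taking homogeneous
components; hence it preserves the filtration and the parity, and conjugates the constant term
\<open>T = CT\<close>. This gives (i), the converse being part of the definition. For the rest, shortness
makes \<open>T(a * b)\<close> vanish for homogeneous \<open>a, b\<close> of different degrees, so nondegeneracy on each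
\<open>A\<^sub>i\<close> makes \<open>b \<mapsto> (a \<mapsto> T(a * b))\<close> injective on all of \<open>A\<close>. It therefore suffices to compare
pairings: with \<open>y = \<rho> b\<close>,
  \<open>T(y * g(\<rho> a)) = T(\<rho> a * \<rho> b) = cnj T(a * b) = cnj T(b * g a) = T(y * \<rho>(g a))\<close>,
and Hermitian means \<open>T(b * \<rho>\<^sup>2 a) = T(a * b) = T(b * g a)\<close> for all \<open>b\<close>.\<close>

lemma conjugation_one:
  assumes "conjugation sc A pb rho"
  shows "rho 1 = 1"
proof -
  obtain u where u: "rho u = 1" using assms by (metis conjugation_def bij_pointE)
  have "rho 1 = rho 1 * rho u" using u by simp
  also have "\<dots> = rho u" using assms unfolding conjugation_def by (metis mult_1)
  finally show ?thesis using u by simp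
qed

lemma conjugation_add: "conjugation sc A pb rho \<Longrightarrow> rho (x + y) = rho x + rho y"
  by (simp add: conjugation_def antilinear_def)

lemma conjugation_zero: "conjugation sc A pb rho \<Longrightarrow> rho 0 = 0"
  using conjugation_add[of sc A pb rho 0 0] by simp

lemma conjugation_minus: "conjugation sc A pb rho \<Longrightarrow> rho (- x) = - rho x"
  using conjugation_add[of sc A pb rho x "- x"] conjugation_zero[of sc A pb rho] by (simp add: minus_unique)

lemma conjugation_graded: "conjugation sc A pb rho \<Longrightarrow> x \<in> A d \<Longrightarrow> rho x \<in> A d"
  unfolding conjugation_def by blast

locale graded_vector_space = vector_space sc
  for sc :: "complex \<Rightarrow> 'a::comm_ring_1 \<Rightarrow> 'a" +
  fixes A :: "nat \<Rightarrow> 'a set"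
  assumes subspace_graded: "subspace (A d)"
    and hdecomp_unique: "\<exists>!f. hdecomp A x f"
begin

lemma zero_in_graded: "0 \<in> A d"
  using subspace_0[OF subspace_graded] .

lemma hdecomp_comp: "hdecomp A x (comp A x)"
  unfolding comp_def using hdecomp_unique[of x] by (rule theI')

lemma comp_eqI: "hdecomp A x f \<Longrightarrow> comp A x = f"
  using hdecomp_comp[of x] hdecomp_unique[of x] by blast

lemma comp_in_graded: "comp A x d \<in> A d"
  using hdecomp_comp[of x] by (simp add: hdecomp_def)

lemma finite_comp_support: "finite {d. comp A x d \<noteq> 0}"
  using hdecomp_comp[of x] by (simp add: hdecomp_def)

lemma sum_comp: "x = (\<Sum>d\<in>{d. comp A x d \<noteq> 0}. comp A x d)"
  using hdecomp_comp[of x] by (simp add: hdecomp_def)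

lemma sum_comp_superset:
  assumes "finite S" "{d. comp A x d \<noteq> 0} \<subseteq> S"
  shows "x = (\<Sum>d\<in>S. comp A x d)"
proof -
  have "(\<Sum>d\<in>{d. comp A x d \<noteq> 0}. comp A x d) = (\<Sum>d\<in>S. comp A x d)"
    by (rule sum.mono_neutral_left) (use assms in auto)
  then show ?thesis using sum_comp[of x] by simp
qed

lemma comp_homogeneous:
  assumes "x \<in> A j"
  shows "comp A x = (\<lambda>d. if d = j then x else 0)"
proof (rule comp_eqI)
  have "{d. (if d = j then x else 0) \<noteq> 0} = (if x = 0 then {} else {j})" by auto
  then show "hdecomp A x (\<lambda>d. if d = j then x else 0)"
    unfolding hdecomp_def using assms zero_in_graded by auto
qed

lemma comp_add: "comp A (x + y) d = comp A x d + comp A y d"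
proof -
  let ?S = "{d. comp A x d \<noteq> 0} \<union> {d. comp A y d \<noteq> 0}"
  have fin: "finite ?S" using finite_comp_support by auto
  have fin_sum: "finite {d. comp A x d + comp A y d \<noteq> 0}"
    by (rule finite_subset[OF _ fin]) auto
  have "(\<Sum>d\<in>{d. comp A x d + comp A y d \<noteq> 0}. comp A x d + comp A y d)
      = (\<Sum>d\<in>?S. comp A x d + comp A y d)"
    by (rule sum.mono_neutral_left) (use fin in auto)
  also have "\<dots> = (\<Sum>d\<in>?S. comp A x d) + (\<Sum>d\<in>?S. comp A y d)"
    by (rule sum.distrib)
  also have "\<dots> = x + y"
    using sum_comp_superset[OF fin, of x] sum_comp_superset[OF fin, of y] by auto
  finally have "hdecomp A (x + y) (\<lambda>d. comp A x d + comp A y d)"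
    unfolding hdecomp_def using fin_sum comp_in_graded subspace_add[OF subspace_graded] by auto
  then show ?thesis by (simp add: comp_eqI)
qed

lemma comp_additive_map:
  assumes add: "\<And>x y. r (x + y) = r x + r y"
    and "inj r"
    and graded: "\<And>d x. x \<in> A d \<Longrightarrow> r x \<in> A d"
  shows "comp A (r x) d = r (comp A x d)"
proof -
  have r0: "r 0 = 0" using add[of 0 0] by simp
  then have nz: "r z \<noteq> 0 \<longleftrightarrow> z \<noteq> 0" for z using \<open>inj r\<close> by (metis injD)
  have "r x = r (\<Sum>d\<in>{d. comp A x d \<noteq> 0}. comp A x d)"
    using sum_comp[of x] by (rule arg_cong)
  also have "\<dots> = (\<Sum>d\<in>{d. comp A x d \<noteq> 0}. r (comp A x d))"
    using sum_comp_morphism[of r "comp A x", OF r0 add] by (simp add: o_def)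
  finally have "r x = (\<Sum>d\<in>{d. comp A x d \<noteq> 0}. r (comp A x d))" .
  then have "hdecomp A (r x) (\<lambda>d. r (comp A x d))"
    unfolding hdecomp_def nz using finite_comp_support graded comp_in_graded by auto
  then show ?thesis by (simp add: comp_eqI)
qed

lemma comp_conjugation:
  assumes "conjugation sc A pb rho"
  shows "comp A (rho x) d = rho (comp A x d)"
  by (rule comp_additive_map)
    (use assms conjugation_add[OF assms] conjugation_graded[OF assms] in
      \<open>auto simp: conjugation_def bij_def\<close>)

lemma conjugation_filt:
  assumes "conjugation sc A pb rho"
  shows "rho ` filt A n \<subseteq> filt A n"
  unfolding filt_def by (auto simp: comp_conjugation[OF assms] conjugation_zero[OF assms])

lemma conjugation_par:
  assumes "conjugation sc A pb rho"
  shows "rho (par A x) = par A (rho x)"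
proof -
  have "inj rho" using assms by (simp add: conjugation_def bij_def)
  then have supp: "{d. comp A (rho x) d \<noteq> 0} = {d. comp A x d \<noteq> 0}"
    by (metis comp_conjugation[OF assms] conjugation_zero[OF assms] injD)
  have rho_sum: "rho (sum f S) = (\<Sum>e\<in>S. rho (f e))" for f and S :: "nat set"
    using sum_comp_morphism[of rho f S, OF conjugation_zero[OF assms] conjugation_add[OF assms]]
    by (simp add: o_def)
  show ?thesis
    unfolding par_def supp rho_sum
    by (rule sum.cong) (simp_all add: comp_conjugation[OF assms] conjugation_minus[OF assms])
qed

end

locale connected_graded_vector_space = graded_vector_space +
  assumes one_neq_zero: "(1::'a) \<noteq> 0"
    and degree_zero: "A 0 = range (\<lambda>c. sc c 1)"
begin

lemma CT_eqI: "comp A x 0 = sc c 1 \<Longrightarrow> CT sc A x = c"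
  unfolding CT_def by (rule the_equality) (auto simp: one_neq_zero)

lemma comp_zero_eq_CT: "comp A x 0 = sc (CT sc A x) 1"
proof -
  obtain c where "comp A x 0 = sc c 1" using comp_in_graded[of x 0] degree_zero by auto
  then show ?thesis using CT_eqI by metis
qed

lemma CT_add: "CT sc A (x + y) = CT sc A x + CT sc A y"
  by (rule CT_eqI) (simp add: comp_add comp_zero_eq_CT[of x] comp_zero_eq_CT[of y] scale_left_distrib)

lemma CT_zero: "CT sc A 0 = 0"
  using CT_add[of 0 0] by simp

lemma CT_sum: "CT sc A (sum f S) = (\<Sum>e\<in>S. CT sc A (f e))"
  using sum_comp_morphism[of "CT sc A" f S, OF CT_zero CT_add] by (simp add: o_def)

lemma CT_positive_degree:
  assumes "x \<in> A m" "m > 0"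
  shows "CT sc A x = 0"
  by (rule CT_eqI) (use comp_homogeneous[OF assms(1)] assms(2) in simp)

lemma CT_antilinear_map:
  assumes "antilinear sc r" "inj r" "r 1 = 1" "\<And>d x. x \<in> A d \<Longrightarrow> r x \<in> A d"
  shows "CT sc A (r x) = cnj (CT sc A x)"
proof (rule CT_eqI)
  have "comp A (r x) 0 = r (comp A x 0)"
    by (rule comp_additive_map) (use assms in \<open>auto simp: antilinear_def\<close>)
  then show "comp A (r x) 0 = sc (cnj (CT sc A x)) 1"
    using assms(1,3) by (simp add: comp_zero_eq_CT antilinear_def)
qed

lemma CT_conjugation:
  assumes "conjugation sc A pb rho"
  shows "CT sc A (rho x) = cnj (CT sc A x)"
  by (rule CT_antilinear_map)
    (use assms conjugation_one[OF assms] conjugation_graded[OF assms] in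
      \<open>auto simp: conjugation_def bij_def\<close>)

end

locale short_star_product = connected_graded_vector_space sc A
  for sc :: "complex \<Rightarrow> 'a::comm_ring_1 \<Rightarrow> 'a" and A +
  fixes C :: "nat \<Rightarrow> 'a \<Rightarrow> 'a \<Rightarrow> 'a"
  assumes bilinear_C: "bilinear_sc sc (C k)"
    and C_graded: "x \<in> A i \<Longrightarrow> y \<in> A j \<Longrightarrow> 2 * k \<le> i + j \<Longrightarrow> C k x y \<in> A (i + j - 2 * k)"
    and short: "short A C"
begin

lemma C_add_right: "C k y (u + v) = C k y u + C k y v"
  using bilinear_C[of k] by (simp add: bilinear_sc_def)

lemma C_zero_right: "C k y 0 = 0"
  using C_add_right[of k y 0 0] by simp

lemma C_eq_0_above_degree:
  assumes "y \<in> A j" "j < k"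
  shows "C k y z = 0"
proof -
  have "C k y z = C k y (\<Sum>e\<in>{d. comp A z d \<noteq> 0}. comp A z e)"
    using sum_comp[of z] by (rule arg_cong)
  also have "\<dots> = (\<Sum>e\<in>{d. comp A z d \<noteq> 0}. C k y (comp A z e))"
    using sum_comp_morphism[of "C k y" "comp A z", OF C_zero_right C_add_right] by (simp add: o_def)
  also have "\<dots> = 0"
  proof (rule sum.neutral, rule ballI)
    fix e
    have "min j e < k" using assms(2) by simp
    then show "C k y (comp A z e) = 0"
      using short assms(1) comp_in_graded[of z e] unfolding short_def by blast
  qed
  finally show ?thesis .
qed

lemma star_homogeneous:
  assumes "y \<in> A j"
  shows "star C y z = (\<Sum>k\<le>j. C k y z)"
  unfolding star_def
proof (rule sum.mono_neutral_left)
  show "{k. C k y z \<noteq> 0} \<subseteq> {..j}"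
    using C_eq_0_above_degree[OF assms] by (auto simp: not_le[symmetric])
qed auto

lemma star_add_right: "y \<in> A j \<Longrightarrow> star C y (u + v) = star C y u + star C y v"
  by (simp add: star_homogeneous C_add_right sum.distrib)

lemma CT_star_add_right:
  assumes "y \<in> A j"
  shows "CT sc A (star C y (u + v)) = CT sc A (star C y u) + CT sc A (star C y v)"
  by (simp add: star_add_right[OF assms] CT_add)

lemma CT_star_zero_right: "CT sc A (star C y 0) = 0"
  by (simp add: star_def C_zero_right CT_zero)

text \<open>Shortness is essential here: it leaves only terms \<open>C\<^sub>k(y, w)\<close> with \<open>k \<le> min j e\<close>,
of positive degree \<open>j + e - 2k\<close> since \<open>j \<noteq> e\<close>.\<close>

lemma CT_star_different_degrees:
  assumes y: "y \<in> A j" and w: "w \<in> A e" and "e \<noteq> j"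
  shows "CT sc A (star C y w) = 0"
proof -
  have "CT sc A (C k y w) = 0" for k
  proof (cases "min j e < k")
    case True
    then have "C k y w = 0" using short y w unfolding short_def by blast
    then show ?thesis by (simp add: CT_zero)
  next
    case False
    then have "C k y w \<in> A (j + e - 2 * k)" using C_graded[OF y w] by simp
    moreover have "j + e - 2 * k > 0" using False \<open>e \<noteq> j\<close> by auto
    ultimately show ?thesis by (rule CT_positive_degree)
  qed
  then show ?thesis by (simp add: star_homogeneous[OF y] CT_sum)
qed

end

locale nondegenerate_short_star_product = short_star_product +
  assumes nondegenerate: "nondegenerate sc A C"
begin

lemma eq_0_if_CT_star_eq_0:
  assumes "\<And>j y. y \<in> A j \<Longrightarrow> CT sc A (star C y z) = 0"
  shows "z = 0"
proof (rule ccontr)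
  assume "z \<noteq> 0"
  let ?S = "{d. comp A z d \<noteq> 0}"
  obtain j where j: "j \<in> ?S" using \<open>z \<noteq> 0\<close> sum_comp[of z] by fastforce
  have "CT sc A (star C y (comp A z j)) = 0" if y: "y \<in> A j" for y
  proof -
    have "CT sc A (star C y z) = CT sc A (star C y (\<Sum>e\<in>?S. comp A z e))"
      using sum_comp[of z] by (rule arg_cong)
    also have "\<dots> = (\<Sum>e\<in>?S. CT sc A (star C y (comp A z e)))"
      using sum_comp_morphism[of "\<lambda>w. CT sc A (star C y w)" "comp A z",
          OF CT_star_zero_right CT_star_add_right[OF y]]
      by (simp add: o_def)
    also have "\<dots> = CT sc A (star C y (comp A z j))"
      using j finite_comp_support[of z] comp_in_graded CT_star_different_degrees[OF y]
      by (subst sum.remove[of _ j]) (auto intro!: sum.neutral)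
    finally show ?thesis using assms[OF y] by simp
  qed
  then have "comp A z j = 0" using nondegenerate comp_in_graded unfolding nondegenerate_def by blast
  with j show False by simp
qed

lemma CT_star_right_cancel:
  assumes "\<And>y. CT sc A (star C y u) = CT sc A (star C y v)"
  shows "u = v"
proof -
  have "u - v = 0"
  proof (rule eq_0_if_CT_star_eq_0)
    fix j y assume y: "y \<in> A j"
    have "CT sc A (star C y u) = CT sc A (star C y v) + CT sc A (star C y (u - v))"
      using star_add_right[OF y, of v "u - v"] CT_add by simp
    then show "CT sc A (star C y (u - v)) = 0" using assms[of y] by simp
  qed
  then show ?thesis by simp
qed

lemma conjugation_commutes_with_twist:
  assumes "surj rho"
    and star: "\<And>x y. rho (star C x y) = star C (rho x) (rho y)"
    and CT_rho: "\<And>x. CT sc A (rho x) = cnj (CT sc A x)"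
    and twist: "\<And>x y. CT sc A (star C x y) = CT sc A (star C y (g x))"
  shows "rho \<circ> g = g \<circ> rho"
proof
  fix a
  have "CT sc A (star C y (g (rho a))) = CT sc A (star C y (rho (g a)))" for y
  proof -
    obtain b where b: "y = rho b" using \<open>surj rho\<close> by (metis surjD)
    have "CT sc A (star C y (g (rho a))) = CT sc A (star C (rho a) (rho b))"
      using twist b by simp
    also have "\<dots> = cnj (CT sc A (star C a b))" using star CT_rho by metis
    also have "\<dots> = cnj (CT sc A (star C b (g a)))" using twist by simp
    also have "\<dots> = CT sc A (star C y (rho (g a)))" using star CT_rho b by metis
    finally show ?thesis .
  qed
  then show "(rho \<circ> g) a = (g \<circ> rho) a" by (simp add: CT_star_right_cancel)
qed

lemma hermitian_iff_square_eq_twist: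
  assumes "conj_invariant C rho"
    and twist: "\<And>x y. CT sc A (star C x y) = CT sc A (star C y (g x))"
  shows "hermitian sc A C rho \<longleftrightarrow> rho \<circ> rho = g"
proof
  assume "hermitian sc A C rho"
  then have "CT sc A (star C y (rho (rho x))) = CT sc A (star C y (g x))" for x y
    using twist unfolding hermitian_def by metis
  then have "rho (rho x) = g x" for x by (rule CT_star_right_cancel)
  then show "rho \<circ> rho = g" by auto
next
  assume "rho \<circ> rho = g"
  then show "hermitian sc A C rho"
    unfolding hermitian_def using assms short by (metis comp_apply)
qed

end

lemma nondegenerate_short_star_productI:
  assumes "graded_poisson sc A pb" "star_product sc A pb C" "short A C" "nondegenerate sc A C"
  shows "nondegenerate_short_star_product sc A C"
  using assms
  unfolding nondegenerate_short_star_product_def nondegenerate_short_star_product_axioms_def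
    short_star_product_def short_star_product_axioms_def connected_graded_vector_space_def
    connected_graded_vector_space_axioms_def graded_vector_space_def graded_vector_space_axioms_def
    graded_poisson_def star_product_def
  by metis

theorem lemma3p23:
  fixes sc :: "complex \<Rightarrow> 'a::comm_ring_1 \<Rightarrow> 'a"
    and A :: "nat \<Rightarrow> 'a set"
    and pb :: "'a \<Rightarrow> 'a \<Rightarrow> 'a"
    and rho :: "'a \<Rightarrow> 'a"
    and C :: "nat \<Rightarrow> 'a \<Rightarrow> 'a \<Rightarrow> 'a"
    and g :: "'a \<Rightarrow> 'a"
  assumes "graded_poisson sc A pb"
    and "conjugation sc A pb rho"
    and "star_product sc A pb C"
    and "short A C"
    and "nondegenerate sc A C"
    and "twist_aut sc A C g"
  shows "(conj_invariant C rho \<longleftrightarrow>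
            quant_conjugation sc A C rho \<and> (\<forall>x. CT sc A (rho x) = cnj (CT sc A x)))
       \<and> (conj_invariant C rho \<longrightarrow> rho \<circ> g = g \<circ> rho)
       \<and> (conj_invariant C rho \<longrightarrow> (hermitian sc A C rho \<longleftrightarrow> rho \<circ> rho = g))"
proof -
  interpret nondegenerate_short_star_product sc A C
    using assms(1,3-5) by (rule nondegenerate_short_star_productI)
  have twist: "\<And>x y. CT sc A (star C x y) = CT sc A (star C y (g x))"
    using assms(6) by (simp add: twist_aut_def)
  have CT_rho: "CT sc A (rho x) = cnj (CT sc A x)" for x
    using assms(2) by (rule CT_conjugation)
  have "conj_invariant C rho \<Longrightarrow> quant_conjugation sc A C rho"
    using assms(2) conjugation_filt[OF assms(2)] conjugation_par[OF assms(2)]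
    by (simp add: quant_conjugation_def conj_invariant_def conjugation_def)
  moreover have "conj_invariant C rho \<Longrightarrow> rho \<circ> g = g \<circ> rho"
    using assms(2) CT_rho twist
    by (intro conjugation_commutes_with_twist) (auto simp: conj_invariant_def conjugation_def bij_def)
  ultimately show ?thesis
    using CT_rho twist hermitian_iff_square_eq_twist
    by (auto simp: quant_conjugation_def conj_invariant_def)
qed

end
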